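(* In the setting described in the context (Assumptions A and B hold), let the VS-PGR scheme be run with step size $\alpha>0$ satisfying $\alpha\le L$ and a non-decreasing sequence of batch sizes $\{S_k\}$ with $S_0\ge 1/\alpha^2$. Let $\tilde L\triangleq\sqrt{1+2(1+2\alpha^2)\nu_1^2+2L^2}$ and $\nu^2\triangleq 2(1+2\alpha^2)\nu_1^2\|x^*\|^2+(1+2\alpha^2)\nu_2^2$. Then for every $k\ge0$, $$\mathbb{E}\big[\|x_{k+1}-x^*\|^2\mid\mathcal{F}_k\big]\le\big(1-2\alpha\eta+\alpha^2\tilde L^2\big)\|x_k-x^*\|^2+\frac{\nu^2}{S_k}\quad\text{a.s.}$$
   Context: Game: $n$ players; player $i$ chooses $x_i\in\mathbb{R}^{d_i}$, $x=(x_1,\dots,x_n)\in\mathbb{R}^d$, and solves $\min_{x_i} f_i(x_i,x_{-i})+r_i(x_i)$ with $f_i(x)=\mathbb{E}[\psi_i(x;\xi_i)]$, $\xi_i$ a random vector in $\mathbb{R}^{m_i}$, $\psi_i:\mathbb{R}^d\times\mathbb{R}^{m_i}\to\mathbb{R}$. A Nash equilibrium (NE) is $x^*$ such that for each $i$, $x_i^*$ minimizes $f_i(\cdot,x_{-i}^* )+r_i(\cdot)$. Assumption A: for each $i$, (i) $r_i$ is lower semicontinuous and convex with effective domain $\mathcal{R}_i$; (ii) for every $x_{-i}\in\prod_{j\ne i}\mathcal{R}_j$, $f_i(\cdot,x_{-i})$ is continuously differentiable and convex on an open set containing $\mathcal{R}_i$; (iii) for every such $x_{-i}$ and every $\xi_i$,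 $\psi_i(\cdot,x_{-i};\xi_i)$ is differentiable on an open set containing $\mathcal{R}_i$. Let $\mathcal{R}=\prod_j\mathcal{R}_j$ and $G(x)=(\nabla_{x_i}f_i(x))_{i=1}^n$. $\mathrm{prox}_{\alpha r_i}(z)=\arg\min_y\big(r_i(y)+\frac1{2\alpha}\|y-z\|^2\big)$. VS-PGR scheme: with $x_{i,0}\in\mathcal{R}_i$, at iteration $k$ each player $i$ draws $S_k$ realizations $\xi_{i,k}^1,\dots,\xi_{i,k}^{S_k}$ of $\xi_i$ and sets $x_{i,k+1}=\mathrm{prox}_{\alpha r_i}\big[x_{i,k}-\frac{\alpha}{S_k}\sum_{p=1}^{S_k}\nabla_{x_i}\psi_i(x_k;\xi_{i,k}^p)\big]$. Let $\bar w_{k,S_k}=\frac1{S_k}\sum_{p=1}^{S_k}(\nabla_{x_i}\psi_i(x_k;\xi_{i,k}^p))_{i=1}^n-G(x_k)$ and $\mathcal{F}_k=\sigma\{x_0,\dots,x_k\}$. Assumption B: (i) $\|G(x)-G(y)\|\le L\|x-y\|$ for all $x,y\in\mathcal{R}$; (ii) $(G(x)-G(y))^T(x-y)\ge\eta\|x-y\|^2$ for all $x,y\in\mathcal{R}$, with $\eta>0$; (iii) there are $\nu_1,\nu_2\ge0$ with $\mathbb{E}[\|\bar w_{k,S_k}\|^2\mid\mathcal{F}_k]\le(\nu_1^2\|x_k\|^2+\nu_2^2)/S_k$ a.s. for all $k\ge0$. Under these assumptions the NE $x^*$ exists and is unique. *)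

theory Defs
  imports "HOL-Analysis.Analysis" "HOL-Probability.Probability"
begin

text \<open>The map blk assigns each coordinate of R^d to the player owning it, so that
  R^d is the product of the players' spaces R^(d_i), where R^(d_i) is identified
  with the coordinate subspace blk_space blk i.\<close>

definition blk_space :: "('d::finite \<Rightarrow> 'n) \<Rightarrow> 'n \<Rightarrow> (real^'d) set" where
  "blk_space blk i = {y. \<forall>j. blk j \<noteq> i \<longrightarrow> y $ j = 0}"

text \<open>x_i, the block of player i (embedded in R^d, zero outside block i).\<close>
definition blk_proj :: "('d::finite \<Rightarrow> 'n) \<Rightarrow> 'n \<Rightarrow> real^'d \<Rightarrow> real^'d" where
  "blk_proj blk i x = (\<chi> j. if blk j = i then x $ j else 0)"

text \<open>(y_i, x_{-i}): replace player i's block of x by the block of y.\<close>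
definition blk_upd :: "('d::finite \<Rightarrow> 'n) \<Rightarrow> 'n \<Rightarrow> real^'d \<Rightarrow> real^'d \<Rightarrow> real^'d" where
  "blk_upd blk i x y = (\<chi> j. if blk j = i then y $ j else x $ j)"

text \<open>Effective domain R_i of r_i (r_i is a function on player i's space).\<close>
definition eff_dom :: "('d::finite \<Rightarrow> 'n) \<Rightarrow> 'n \<Rightarrow> (real^'d \<Rightarrow> ereal) \<Rightarrow> (real^'d) set" where
  "eff_dom blk i ri = {y \<in> blk_space blk i. ri y < \<infinity>}"

definition joint_dom :: "('d::finite \<Rightarrow> 'n) \<Rightarrow> ('n \<Rightarrow> real^'d \<Rightarrow> ereal) \<Rightarrow> (real^'d) set" where
  "joint_dom blk r = {x. \<forall>i. blk_proj blk i x \<in> eff_dom blk i (r i)}"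

definition lsc_on :: "'a::topological_space set \<Rightarrow> ('a \<Rightarrow> ereal) \<Rightarrow> bool" where
  "lsc_on S g \<longleftrightarrow> (\<forall>y\<in>S. g y \<le> Liminf (at y within S) g)"

definition prox :: "('d::finite \<Rightarrow> 'n) \<Rightarrow> 'n \<Rightarrow> real \<Rightarrow> (real^'d \<Rightarrow> ereal) \<Rightarrow> real^'d \<Rightarrow> real^'d" where
  "prox blk i \<alpha> ri z = (THE y. y \<in> blk_space blk i \<and>
      (\<forall>u\<in>blk_space blk i. ri y + ereal (norm (y - z)^2 / (2*\<alpha>)) \<le> ri u + ereal (norm (u - z)^2 / (2*\<alpha>))))"

definition is_NE :: "('d::finite \<Rightarrow> 'n) \<Rightarrow> ('n \<Rightarrow> real^'d \<Rightarrow> real) \<Rightarrow> ('n \<Rightarrow> real^'d \<Rightarrow> ereal) \<Rightarrow> real^'d \<Rightarrow> bool" where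
  "is_NE blk f r xs \<longleftrightarrow> (\<forall>i. \<forall>y\<in>blk_space blk i.
      ereal (f i xs) + r i (blk_proj blk i xs) \<le> ereal (f i (blk_upd blk i xs y)) + r i y)"

definition nat_filtration :: "'a measure \<Rightarrow> (nat \<Rightarrow> 'a \<Rightarrow> 'b::topological_space) \<Rightarrow> nat \<Rightarrow> 'a measure" where
  "nat_filtration M X k = sigma (space M) {X j -` A \<inter> space M | j A. j \<le> k \<and> A \<in> sets borel}"

end

theory Submission
  imports Defs
begin

text \<open>Since prox is defined by THE, one first shows that the proximal objective of a proper convex
  lower semicontinuous function on a closed set is coercive, hence has a unique minimiser, which is
  characterised by a variational inequality; proximal maps are therefore nonexpansive. Every block
  of x_{k+1} is a proximal point, and the first-order conditions of the Nash equilibrium show that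
  x* is a fixed point of the same map with the exact gradient G. Hence the error of x_{k+1} is at
  most that of the perturbed gradient step x_k - x* - alpha (G x_k - G x* + w_k), whose square
  strong monotonicity and Lipschitz continuity of G bound by the contraction factor times
  norm (x_k - x*)^2 plus (1 + 2 alpha^2) norm w_k^2. Conditioning on F_k and using B(iii) gives
  the claim.\<close>

lemma lsc_on_iff_eventually:
  "lsc_on S g \<longleftrightarrow> (\<forall>y\<in>S. \<forall>c<g y. eventually (\<lambda>w. c < g w) (at y within S))"
  unfolding lsc_on_def le_Liminf_iff ..

lemma lsc_on_subset: "lsc_on T g \<Longrightarrow> S \<subseteq> T \<Longrightarrow> lsc_on S g"
  unfolding lsc_on_iff_eventually by (meson at_le filter_leD subsetD)

lemma lsc_on_add_continuous:
  assumes g: "lsc_on S g" and q: "continuous_on S q"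
  shows "lsc_on S (\<lambda>y. g y + ereal (q y))"
  unfolding lsc_on_iff_eventually
proof (intro ballI allI impI)
  fix y c assume y: "y \<in> S" and c: "c < g y + ereal (q y)"
  obtain b where b: "c < ereal b" "ereal b < g y + ereal (q y)"
    using c ereal_dense2 by blast
  have "ereal (b - q y) < g y"
    using b(2) by (cases "g y") auto
  then obtain a where a: "ereal (b - q y) < ereal a" "ereal a < g y"
    using ereal_dense2 by blast
  have "eventually (\<lambda>w. ereal a < g w) (at y within S)"
    using g y a(2) unfolding lsc_on_iff_eventually by blast
  moreover have "eventually (\<lambda>w. dist (q w) (q y) < a + q y - b) (at y within S)"
    using q y a(1) unfolding continuous_on_def by (auto intro: tendstoD)
  ultimately show "eventually (\<lambda>w. c < g w + ereal (q w)) (at y within S)"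
  proof eventually_elim
    case (elim w)
    then have "ereal b < g w + ereal (q w)"
      by (cases "g w") (auto simp: dist_real_def)
    then show ?case using b(1) by order
  qed
qed

lemma lsc_on_open_nhd:
  assumes "lsc_on C \<phi>" "y \<in> C" "c < \<phi> y"
  shows "\<exists>U. open U \<and> y \<in> U \<and> (\<forall>w\<in>U \<inter> C. c < \<phi> w)"
proof -
  have "eventually (\<lambda>w. c < \<phi> w) (at y within C)"
    using assms unfolding lsc_on_iff_eventually by blast
  then obtain U where "open U" "y \<in> U" "\<forall>w\<in>U. w \<in> C \<longrightarrow> w \<noteq> y \<longrightarrow> c < \<phi> w"
    unfolding eventually_at_topological by blast
  then show ?thesis
    using assms(3) by blast
qed

text \<open>Otherwise every point has a neighbourhood on which \<phi> exceeds its value at a better point;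
  among the better points of a finite subcover one of least value contradicts this.\<close>
lemma lsc_on_compact_attains_min:
  fixes \<phi> :: "'a::topological_space \<Rightarrow> ereal"
  assumes "compact C" "C \<noteq> {}" "lsc_on C \<phi>"
  shows "\<exists>p\<in>C. \<forall>u\<in>C. \<phi> p \<le> \<phi> u"
proof (rule ccontr)
  assume "\<not> ?thesis"
  then have "\<forall>y\<in>C. \<exists>y'\<in>C. \<phi> y' < \<phi> y"
    by (auto simp: not_le)
  then obtain next_pt where next_pt: "\<forall>y\<in>C. next_pt y \<in> C \<and> \<phi> (next_pt y) < \<phi> y"
    by metis
  have "\<forall>y\<in>C. \<exists>c. \<phi> (next_pt y) < ereal c \<and> ereal c < \<phi> y"
    using next_pt ereal_dense2 by blast
  then obtain c where c: "\<forall>y\<in>C. \<phi> (next_pt y) < ereal (c y) \<and> ereal (c y) < \<phi> y"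
    by metis
  have "\<forall>y\<in>C. \<exists>U. open U \<and> y \<in> U \<and> (\<forall>w\<in>U \<inter> C. ereal (c y) < \<phi> w)"
    using lsc_on_open_nhd[OF assms(3)] c by blast
  then obtain U where U: "\<forall>y\<in>C. open (U y) \<and> y \<in> U y \<and> (\<forall>w\<in>U y \<inter> C. ereal (c y) < \<phi> w)"
    by metis
  have cover: "C \<subseteq> (\<Union>y\<in>C. U y)" and U_open: "\<And>y. y \<in> C \<Longrightarrow> open (U y)"
    using U by blast+
  obtain T where T: "T \<subseteq> C" "finite T" "C \<subseteq> (\<Union>y\<in>T. U y)"
    by (rule compactE_image[OF assms(1) U_open cover])
  have "T \<noteq> {}" using T(3) assms(2) by auto
  define t0 where "t0 = arg_min_on (\<lambda>t. \<phi> (next_pt t)) T"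
  have t0: "t0 \<in> T" "\<forall>t\<in>T. \<phi> (next_pt t0) \<le> \<phi> (next_pt t)"
    using arg_min_if_finite[OF T(2) \<open>T \<noteq> {}\<close>, of "\<lambda>t. \<phi> (next_pt t)"]
    unfolding t0_def by (auto simp: not_less)
  have "next_pt t0 \<in> C" using next_pt t0(1) T(1) by blast
  then obtain t where t: "t \<in> T" "next_pt t0 \<in> U t"
    using T(3) by blast
  then have "ereal (c t) < \<phi> (next_pt t0)"
    using U T(1) \<open>next_pt t0 \<in> C\<close> by blast
  moreover have "\<phi> (next_pt t) < ereal (c t)"
    using c t(1) T(1) by blast
  ultimately have "\<phi> (next_pt t) < \<phi> (next_pt t0)"
    by (rule less_trans[rotated])
  moreover have "\<phi> (next_pt t0) \<le> \<phi> (next_pt t)"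
    using t0(2) t(1) by blast
  ultimately show False by (metis leD)
qed

lemma norm_diff_sq:
  fixes a b :: "'a::real_inner"
  shows "norm (a - b)^2 = norm a^2 - 2 * (a \<bullet> b) + norm b^2"
  by (simp add: power2_norm_eq_inner inner_diff_left inner_diff_right inner_commute)

lemma norm_add_sq:
  fixes a b :: "'a::real_inner"
  shows "norm (a + b)^2 = norm a^2 + 2 * (a \<bullet> b) + norm b^2"
  by (simp add: power2_norm_eq_inner inner_add_left inner_add_right inner_commute)

lemma norm_add_sq_le:
  fixes a b :: "'a::real_normed_vector"
  shows "norm (a + b)^2 \<le> 2 * norm a^2 + 2 * norm b^2"
proof -
  have "norm (a + b)^2 \<le> (norm a + norm b)^2"
    by (intro power_mono norm_triangle_ineq) simp
  also have "\<dots> \<le> 2 * norm a^2 + 2 * norm b^2"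
    using zero_le_power2[of "norm a - norm b"] by (simp add: power2_eq_square algebra_simps)
  finally show ?thesis .
qed

lemma quadratic_dominates_linear:
  fixes \<alpha> a b c0 d g0 :: real
  assumes "\<alpha> > 0" "b \<ge> 0" "d - 2 * c0 - 2 * \<alpha> * b > 2 * \<alpha> * \<bar>g0 - a\<bar>" "d \<ge> 1"
  shows "2 * \<alpha> * g0 + c0^2 < 2 * \<alpha> * (a - b * d) + (d - c0)^2"
proof -
  define X where "X = d - 2 * c0 - 2 * \<alpha> * b"
  have "0 < X"
    using assms unfolding X_def by (smt (verit) abs_ge_zero mult_nonneg_nonneg)
  then have "X \<le> d * X"
    using assms(4) by simp
  moreover have "2 * \<alpha> * (g0 - a) \<le> 2 * \<alpha> * \<bar>g0 - a\<bar>"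
    using assms(1) by (intro mult_left_mono) auto
  moreover have "2 * \<alpha> * (a - b * d) + (d - c0)^2 - (2 * \<alpha> * g0 + c0^2) = d * X - 2 * \<alpha> * (g0 - a)"
    unfolding X_def by (simp add: power2_eq_square algebra_simps)
  ultimately show ?thesis
    using assms(3) unfolding X_def by linarith
qed

lemma convex_min_first_order:
  fixes F :: "'a::real_normed_vector \<Rightarrow> real"
  assumes C: "convex C" and h: "convex_on C h" and p: "p \<in> C" and u: "u \<in> C"
    and F: "(F has_derivative F') (at p)"
    and min: "\<forall>y\<in>C. F p + h p \<le> F y + h y"
  shows "h p - h u \<le> F' (u - p)"
proof -
  define d where "d = u - p"
  have lin: "F' (t *\<^sub>R d) = t * F' d" for t
    using has_derivative_bounded_linear[OF F] by (simp add: bounded_linear.linear linear_scale)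
  have "((\<lambda>t. p + t *\<^sub>R d) has_derivative (\<lambda>t. t *\<^sub>R d)) (at 0)"
    by (auto intro!: derivative_eq_intros)
  moreover have "(F has_derivative F') (at (p + 0 *\<^sub>R d))"
    using F by simp
  ultimately have "((\<lambda>t. F (p + t *\<^sub>R d)) has_derivative (\<lambda>t. F' (t *\<^sub>R d))) (at 0)"
    by (rule has_derivative_compose)
  then have "((\<lambda>t. F (p + t *\<^sub>R d)) has_real_derivative F' d) (at 0)"
    by (simp add: has_field_derivative_def lin mult.commute[of _ "F' d"])
  then have "((\<lambda>t. (F (p + t *\<^sub>R d) - F p) / t) \<longlongrightarrow> F' d) (at_right 0)"
    unfolding DERIV_def by (auto intro: tendsto_mono[OF at_le])
  moreover have "\<forall>\<^sub>F t in at_right 0. h p - h u \<le> (F (p + t *\<^sub>R d) - F p) / t"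
    unfolding eventually_at_right_field
  proof (intro exI[of _ 1] conjI allI impI)
    fix t :: real assume t: "0 < t" "t < 1"
    have y: "p + t *\<^sub>R d = (1 - t) *\<^sub>R p + t *\<^sub>R u"
      by (simp add: d_def algebra_simps)
    have "p + t *\<^sub>R d \<in> C"
      unfolding y using convexD[OF C p u, of "1 - t" t] t by auto
    then have "F p + h p \<le> F (p + t *\<^sub>R d) + h (p + t *\<^sub>R d)"
      using min by blast
    moreover have "h (p + t *\<^sub>R d) \<le> (1 - t) * h p + t * h u"
      unfolding y using convex_onD[OF h, of t p u] t p u by auto
    ultimately have "t * (h p - h u) \<le> F (p + t *\<^sub>R d) - F p"
      by (simp add: algebra_simps)
    then show "h p - h u \<le> (F (p + t *\<^sub>R d) - F p) / t"
      using t by (simp add: pos_le_divide_eq mult.commute)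
  qed simp
  ultimately show ?thesis
    unfolding d_def by (rule tendsto_lowerbound) simp
qed

locale proper_convex_lsc =
  fixes V :: "'a::euclidean_space set" and g :: "'a \<Rightarrow> ereal"
  assumes closed_V: "closed V"
    and convex_g: "convex_on {y\<in>V. g y < \<infinity>} (\<lambda>y. real_of_ereal (g y))"
    and proper: "\<And>y. y \<in> V \<Longrightarrow> g y \<noteq> -\<infinity>"
    and lsc_g: "lsc_on V g"
    and dom_nonempty: "{y\<in>V. g y < \<infinity>} \<noteq> {}"
begin

lemma convex_dom: "convex {y\<in>V. g y < \<infinity>}"
  using convex_g unfolding convex_on_def by blast

lemma finite_value:
  assumes "y \<in> V" "g y < \<infinity>"
  obtains c where "g y = ereal c"
  using assms proper by (cases "g y") auto

lemma convex_bound_beyond_unit_sphere: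
  assumes y0: "y0 \<in> V" "g y0 = ereal g0" and y: "y \<in> V" "g y < \<infinity>" and d: "1 < dist y y0"
    and m: "\<And>w. w \<in> V \<Longrightarrow> dist w y0 = 1 \<Longrightarrow> ereal m \<le> g w"
  shows "dist y y0 * m \<le> (dist y y0 - 1) * g0 + real_of_ereal (g y)"
proof -
  define t where "t = 1 / dist y y0"
  have t: "0 < t" "t \<le> 1" using d unfolding t_def by (auto simp: divide_le_eq)
  define w where "w = (1 - t) *\<^sub>R y0 + t *\<^sub>R y"
  have "w - y0 = t *\<^sub>R (y - y0)" unfolding w_def by (simp add: algebra_simps)
  then have "dist w y0 = 1"
    using d unfolding t_def by (auto simp: dist_norm)
  moreover have w_dom: "w \<in> {y\<in>V. g y < \<infinity>}"
    unfolding w_def using convexD[OF convex_dom, of y0 y "1 - t" t] y0 y t by auto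
  ultimately have "ereal m \<le> g w" using m by blast
  moreover obtain gw where gw: "g w = ereal gw"
    using w_dom finite_value by blast
  moreover have "gw \<le> (1 - t) * g0 + t * real_of_ereal (g y)"
    using convex_onD[OF convex_g, of t y0 y] y0 y t gw unfolding w_def by auto
  ultimately have "m \<le> (1 - t) * g0 + t * real_of_ereal (g y)"
    by simp
  then have "dist y y0 * m \<le> dist y y0 * ((1 - t) * g0 + t * real_of_ereal (g y))"
    by (intro mult_left_mono) auto
  also have "\<dots> = (dist y y0 - 1) * g0 + real_of_ereal (g y)"
    using d unfolding t_def by (auto simp: algebra_simps)
  finally show ?thesis .
qed

text \<open>Bounded below near y0 by lower semicontinuity, and beyond the unit sphere around y0
  by convexity along the segment from y0.\<close>
lemma norm_minorant:
  assumes y0: "y0 \<in> V" "g y0 < \<infinity>"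
  shows "\<exists>a b. 0 \<le> b \<and> (\<forall>y\<in>V. ereal (a - b * dist y y0) \<le> g y)"
proof -
  define K where "K = V \<inter> cball y0 1"
  have "compact K" "K \<noteq> {}" "lsc_on K g"
    using closed_V y0 lsc_on_subset[OF lsc_g] unfolding K_def
    by (auto intro: closed_Int_compact)
  then obtain p where p: "p \<in> K" "\<forall>y\<in>K. g p \<le> g y"
    using lsc_on_compact_attains_min by blast
  define m where "m = real_of_ereal (g p)"
  have m: "ereal m \<le> g y" if "y \<in> K" for y
    using p that proper[of p] unfolding m_def K_def by (cases "g p") auto
  obtain g0 where g0: "g y0 = ereal g0"
    using finite_value[OF y0] .
  define b where "b = max 0 (g0 - m)"
  have "ereal (min m g0 - b * dist y y0) \<le> g y" if y: "y \<in> V" "g y < \<infinity>" for y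
  proof (cases "dist y y0 \<le> 1")
    case True
    have "0 \<le> b * dist y y0" unfolding b_def by simp
    then have "ereal (min m g0 - b * dist y y0) \<le> ereal m"
      by simp
    also have "\<dots> \<le> g y" using m y True unfolding K_def by (simp add: dist_commute)
    finally show ?thesis .
  next
    case False
    define d where "d = dist y y0"
    have "d * m \<le> (d - 1) * g0 + real_of_ereal (g y)"
      unfolding d_def using False m y y0 g0
      by (intro convex_bound_beyond_unit_sphere) (auto simp: K_def dist_commute)
    moreover have "(g0 - m) * d \<le> b * d"
      using False unfolding b_def d_def by (intro mult_right_mono) auto
    ultimately have "min m g0 - b * d \<le> real_of_ereal (g y)"
      by (simp add: algebra_simps min_def)
    then show ?thesis using y proper[of y] unfolding d_def by (cases "g y") auto
  qed
  then have "\<forall>y\<in>V. ereal (min m g0 - b * dist y y0) \<le> g y"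
    by (metis ereal_less_eq(1) less_le)
  moreover have "0 \<le> b" unfolding b_def by simp
  ultimately show ?thesis by blast
qed

end

locale prox_setting = proper_convex_lsc V g for V :: "'a::euclidean_space set" and g +
  fixes \<alpha> :: real
  assumes alpha_pos: "\<alpha> > 0"
begin

definition prox_obj :: "'a \<Rightarrow> 'a \<Rightarrow> ereal" where
  "prox_obj z y = g y + ereal (norm (y - z)^2 / (2 * \<alpha>))"

text \<open>prox_vi z p says that (z - p) / \<alpha> is a subgradient of g at p.\<close>
definition prox_vi :: "'a \<Rightarrow> 'a \<Rightarrow> bool" where
  "prox_vi z p \<longleftrightarrow> p \<in> V \<and> g p < \<infinity> \<and> (\<forall>u\<in>V. g p + ereal ((z - p) \<bullet> (u - p) / \<alpha>) \<le> g u)"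

lemma prox_obj_coercive:
  assumes y0: "y0 \<in> V" "g y0 < \<infinity>"
  shows "\<exists>R\<ge>0. \<forall>y\<in>V. R < dist y y0 \<longrightarrow> prox_obj z y0 < prox_obj z y"
proof -
  obtain a b where b: "0 \<le> b" and minorant: "\<forall>y\<in>V. ereal (a - b * dist y y0) \<le> g y"
    using norm_minorant[OF y0] by blast
  obtain g0 where g0: "g y0 = ereal g0"
    using finite_value[OF y0] .
  define c0 where "c0 = dist y0 z"
  define R where "R = 2 * c0 + 2 * \<alpha> * b + 2 * \<alpha> * \<bar>g0 - a\<bar> + 1"
  have R: "R \<ge> 1" using b alpha_pos unfolding R_def c0_def by simp
  have "prox_obj z y0 < prox_obj z y" if y: "y \<in> V" "R < dist y y0" for y
  proof (cases "g y = \<infinity>")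
    case True
    then show ?thesis by (simp add: prox_obj_def g0)
  next
    case False
    then obtain gy where gy: "g y = ereal gy" using finite_value[OF y(1)] by (simp add: less_le) blast
    define d where "d = dist y y0"
    have d: "d > 1" "d - 2 * c0 - 2 * \<alpha> * b > 2 * \<alpha> * \<bar>g0 - a\<bar>"
      using y(2) R unfolding d_def R_def by auto
    have "d - c0 \<le> norm (y - z)"
      using dist_triangle[of y y0 z] unfolding d_def c0_def by (simp add: dist_norm norm_minus_commute)
    moreover have "0 \<le> d - c0"
      using d alpha_pos b by (smt (verit) abs_ge_zero mult_nonneg_nonneg)
    ultimately have "(d - c0)^2 \<le> norm (y - z)^2" by (rule power_mono)
    moreover have "2 * \<alpha> * g0 + c0^2 < 2 * \<alpha> * (a - b * d) + (d - c0)^2"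
      using quadratic_dominates_linear[OF alpha_pos b d(2)] d(1) by linarith
    moreover have "a - b * d \<le> gy"
      using minorant y(1) gy unfolding d_def by (metis ereal_less_eq(3))
    then have "2 * \<alpha> * (a - b * d) \<le> 2 * \<alpha> * gy"
      using alpha_pos by simp
    ultimately have "2 * \<alpha> * g0 + c0^2 < 2 * \<alpha> * gy + norm (y - z)^2"
      by linarith
    then have "(2 * \<alpha> * g0 + c0^2) / (2 * \<alpha>) < (2 * \<alpha> * gy + norm (y - z)^2) / (2 * \<alpha>)"
      using alpha_pos by (intro divide_strict_right_mono) auto
    then have "g0 + c0^2 / (2 * \<alpha>) < gy + norm (y - z)^2 / (2 * \<alpha>)"
      using alpha_pos by (simp add: add_divide_distrib)
    then show ?thesis by (simp add: prox_obj_def g0 gy c0_def dist_norm)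
  qed
  then show ?thesis using R by (intro exI[of _ R]) auto
qed

lemma prox_obj_attains_min: "\<exists>p\<in>V. \<forall>u\<in>V. prox_obj z p \<le> prox_obj z u"
proof -
  obtain y0 where y0: "y0 \<in> V" "g y0 < \<infinity>"
    using dom_nonempty by blast
  obtain R where R: "R \<ge> 0" "\<forall>y\<in>V. R < dist y y0 \<longrightarrow> prox_obj z y0 < prox_obj z y"
    using prox_obj_coercive[OF y0] by blast
  define C where "C = V \<inter> cball y0 R"
  have "continuous_on C (\<lambda>y. norm (y - z)^2 / (2 * \<alpha>))"
    by (intro continuous_intros) (use alpha_pos in auto)
  then have "lsc_on C (prox_obj z)"
    unfolding prox_obj_def C_def
    by (intro lsc_on_add_continuous lsc_on_subset[OF lsc_g]) auto
  moreover have "compact C" "y0 \<in> C"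
    using closed_V y0 R unfolding C_def by (auto intro: closed_Int_compact)
  ultimately obtain p where p: "p \<in> C" "\<forall>u\<in>C. prox_obj z p \<le> prox_obj z u"
    using lsc_on_compact_attains_min by blast
  have "prox_obj z p \<le> prox_obj z u" if "u \<in> V" for u
  proof (cases "u \<in> C")
    case False
    then have "prox_obj z y0 < prox_obj z u"
      using R that unfolding C_def by (auto simp: dist_commute)
    then show ?thesis using p \<open>y0 \<in> C\<close> by fastforce
  qed (use p in blast)
  then show ?thesis using p unfolding C_def by blast
qed

lemma prox_min_imp_vi:
  assumes p: "p \<in> V" and min: "\<forall>u\<in>V. prox_obj z p \<le> prox_obj z u"
  shows "prox_vi z p"
proof -
  let ?D = "{y\<in>V. g y < \<infinity>}"
  let ?F = "\<lambda>y. norm (y - z)^2 / (2 * \<alpha>)"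
  obtain y0 where "y0 \<in> V" "g y0 < \<infinity>"
    using dom_nonempty by blast
  then have "prox_obj z y0 < \<infinity>"
    by (auto simp: prox_obj_def)
  then have p_dom: "g p < \<infinity>"
    using min \<open>y0 \<in> V\<close> by (fastforce simp: prox_obj_def)
  have F: "(?F has_derivative (\<lambda>v. (p - z) \<bullet> v / \<alpha>)) (at p)"
    unfolding power2_norm_eq_inner
    using alpha_pos by (auto intro!: derivative_eq_intros simp: inner_commute field_simps)
  obtain gp where gp: "g p = ereal gp"
    using finite_value[OF p p_dom] .
  have "\<forall>y\<in>?D. ?F p + real_of_ereal (g p) \<le> ?F y + real_of_ereal (g y)"
  proof
    fix y assume y: "y \<in> ?D"
    then obtain gy where gy: "g y = ereal gy"
      using finite_value by blast
    have "prox_obj z p \<le> prox_obj z y"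
      using min y by blast
    then show "?F p + real_of_ereal (g p) \<le> ?F y + real_of_ereal (g y)"
      using gy gp by (simp add: prox_obj_def add.commute)
  qed
  then have first_order: "gp - real_of_ereal (g u) \<le> (p - z) \<bullet> (u - p) / \<alpha>" if "u \<in> ?D" for u
    using convex_min_first_order[OF convex_dom convex_g _ that F] p p_dom gp by simp
  have "g p + ereal ((z - p) \<bullet> (u - p) / \<alpha>) \<le> g u" if u: "u \<in> V" for u
  proof (cases "g u = \<infinity>")
    case False
    then obtain gu where gu: "g u = ereal gu"
      using u finite_value by (auto simp: less_le)
    have "(z - p) \<bullet> (u - p) = - ((p - z) \<bullet> (u - p))"
      by (simp add: inner_diff_left)
    then show ?thesis
      using first_order[of u] u gu gp by simp
  qed simp
  then show ?thesis
    unfolding prox_vi_def using p p_dom by blast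
qed

lemma prox_vi_imp_min:
  assumes vi: "prox_vi z p" and u: "u \<in> V"
  shows "prox_obj z p \<le> prox_obj z u"
proof (cases "g u = \<infinity>")
  case False
  obtain gp where gp: "g p = ereal gp"
    using vi finite_value unfolding prox_vi_def by blast
  obtain gu where gu: "g u = ereal gu"
    using u False finite_value by (auto simp: less_le)
  have "gp + (z - p) \<bullet> (u - p) / \<alpha> \<le> gu"
    using vi u gp gu unfolding prox_vi_def by auto
  moreover have "norm (u - z)^2 = norm (u - p)^2 - 2 * ((z - p) \<bullet> (u - p)) + norm (p - z)^2"
    using norm_diff_sq[of "u - p" "z - p"] by (simp add: inner_commute norm_minus_commute)
  then have "norm (u - z)^2 / (2 * \<alpha>)
      = norm (u - p)^2 / (2 * \<alpha>) - (z - p) \<bullet> (u - p) / \<alpha> + norm (p - z)^2 / (2 * \<alpha>)"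
    using alpha_pos by (simp add: field_simps)
  moreover have "0 \<le> norm (u - p)^2 / (2 * \<alpha>)"
    using alpha_pos by simp
  ultimately have "gp + norm (p - z)^2 / (2 * \<alpha>) \<le> gu + norm (u - z)^2 / (2 * \<alpha>)"
    by linarith
  then show ?thesis by (simp add: prox_obj_def gp gu)
qed (simp add: prox_obj_def)

text \<open>Adding the two variational inequalities, each tested at the other point, gives
  firm nonexpansiveness: norm (p - q)^2 \<le> (a - b) \<bullet> (p - q).\<close>
lemma prox_vi_nonexpansive:
  assumes vp: "prox_vi a p" and vq: "prox_vi b q"
  shows "norm (p - q) \<le> norm (a - b)"
proof -
  obtain gp where gp: "g p = ereal gp"
    using vp finite_value unfolding prox_vi_def by blast
  obtain gq where gq: "g q = ereal gq"
    using vq finite_value unfolding prox_vi_def by blast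
  have "gp + (a - p) \<bullet> (q - p) / \<alpha> \<le> gq" "gq + (b - q) \<bullet> (p - q) / \<alpha> \<le> gp"
    using vp vq gp gq unfolding prox_vi_def by auto
  then have "((a - p) \<bullet> (q - p) + (b - q) \<bullet> (p - q)) / \<alpha> \<le> 0"
    by (simp add: add_divide_distrib)
  then have "(a - p) \<bullet> (q - p) + (b - q) \<bullet> (p - q) \<le> 0"
    using alpha_pos by (simp add: divide_le_0_iff)
  moreover have "(a - p) \<bullet> (q - p) + (b - q) \<bullet> (p - q) = norm (p - q)^2 - (a - b) \<bullet> (p - q)"
    by (simp add: power2_norm_eq_inner inner_diff_left inner_diff_right inner_commute)
  ultimately have "norm (p - q)^2 \<le> norm (a - b) * norm (p - q)"
    using norm_cauchy_schwarz[of "a - b" "p - q"] by linarith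
  then show ?thesis
    by (metis norm_ge_zero power2_eq_square mult_right_le_imp_le zero_less_norm_iff order_refl norm_eq_zero)
qed

lemma ex1_prox_point: "\<exists>!p. p \<in> V \<and> (\<forall>u\<in>V. prox_obj z p \<le> prox_obj z u)"
proof (rule ex_ex1I)
  show "\<exists>p. p \<in> V \<and> (\<forall>u\<in>V. prox_obj z p \<le> prox_obj z u)"
    using prox_obj_attains_min by blast
next
  fix p q
  assume "p \<in> V \<and> (\<forall>u\<in>V. prox_obj z p \<le> prox_obj z u)" "q \<in> V \<and> (\<forall>u\<in>V. prox_obj z q \<le> prox_obj z u)"
  then have "prox_vi z p" "prox_vi z q"
    using prox_min_imp_vi by blast+
  then show "p = q"
    using prox_vi_nonexpansive[of z p z q] by simp
qed

lemma the_prox_point: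
  "prox_vi z p \<longleftrightarrow> p = (THE p. p \<in> V \<and> (\<forall>u\<in>V. prox_obj z p \<le> prox_obj z u))"
proof
  assume "prox_vi z p"
  then have "p \<in> V \<and> (\<forall>u\<in>V. prox_obj z p \<le> prox_obj z u)"
    using prox_vi_imp_min unfolding prox_vi_def by blast
  then show "p = (THE p. p \<in> V \<and> (\<forall>u\<in>V. prox_obj z p \<le> prox_obj z u))"
    by (rule the1_equality[OF ex1_prox_point, symmetric])
next
  assume "p = (THE p. p \<in> V \<and> (\<forall>u\<in>V. prox_obj z p \<le> prox_obj z u))"
  then show "prox_vi z p"
    using theI'[OF ex1_prox_point] prox_min_imp_vi by blast
qed

end

lemma prox_iff_vi:
  assumes "prox_setting (blk_space blk i) g \<alpha>"
  shows "prox blk i \<alpha> g z = p \<longleftrightarrow> prox_setting.prox_vi (blk_space blk i) g \<alpha> z p"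
proof -
  interpret prox_setting "blk_space blk i" g \<alpha> by fact
  show ?thesis
    unfolding the_prox_point prox_def prox_obj_def by (rule eq_commute)
qed

lemma blk_proj_nth [simp]: "blk_proj blk i x $ j = (if blk j = i then x $ j else 0)"
  by (simp add: blk_proj_def)

lemma blk_proj_in_blk_space: "blk_proj blk i x \<in> blk_space blk i"
  by (simp add: blk_space_def)

lemma linear_blk_proj: "linear (blk_proj blk i)"
  by (intro linearI) (simp_all add: vec_eq_iff)

lemma blk_proj_diff: "blk_proj blk i (a - b) = blk_proj blk i a - blk_proj blk i b"
  by (rule linear_diff[OF linear_blk_proj])

lemma blk_proj_scaleR: "blk_proj blk i (c *\<^sub>R a) = c *\<^sub>R blk_proj blk i a"
  by (rule linear_scale[OF linear_blk_proj])

lemma blk_proj_sum: "blk_proj blk i (sum h A) = (\<Sum>a\<in>A. blk_proj blk i (h a))"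
  by (rule linear_sum[OF linear_blk_proj])

lemma blk_proj_blk_proj: "blk_proj blk i (blk_proj blk m v) = (if m = i then blk_proj blk i v else 0)"
  by (auto simp: vec_eq_iff)

lemma inner_blk_proj_commute: "blk_proj blk i a \<bullet> b = a \<bullet> blk_proj blk i b"
  unfolding inner_vec_def by (intro sum.cong) auto

lemma blk_upd_blk_proj: "blk_upd blk i x (blk_proj blk i x) = x"
  by (simp add: blk_upd_def vec_eq_iff)

lemma closed_blk_space: "closed (blk_space blk i)"
proof -
  have "blk_space blk i = (\<Inter>j\<in>{j. blk j \<noteq> i}. {y. y $ j = 0})"
    unfolding blk_space_def by auto
  then show ?thesis
    by (auto intro!: closed_Collect_eq continuous_intros)
qed

lemma borel_measurable_blk_proj: "blk_proj blk i \<in> borel_measurable borel"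
  by (intro borel_measurable_continuous_onI linear_continuous_on
      linear_conv_bounded_linear[THEN iffD1] linear_blk_proj)

lemma norm_sq_eq_sum_blk_proj:
  fixes blk :: "'d::finite \<Rightarrow> 'n::finite"
  shows "norm v ^ 2 = (\<Sum>i\<in>UNIV. norm (blk_proj blk i v) ^ 2)"
proof -
  have "(if blk j = i then v $ j else 0) * (if blk j = i then v $ j else 0)
      = (if blk j = i then v $ j * v $ j else (0::real))" for j i
    by simp
  then have "norm v ^ 2 = (\<Sum>j\<in>UNIV. \<Sum>i\<in>UNIV. blk_proj blk i v $ j * blk_proj blk i v $ j)"
    unfolding blk_proj_nth by (simp add: power2_norm_eq_inner inner_vec_def)
  also have "\<dots> = (\<Sum>i\<in>UNIV. norm (blk_proj blk i v) ^ 2)"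
    by (subst sum.swap) (simp only: power2_norm_eq_inner inner_vec_def inner_real_def)
  finally show ?thesis .
qed

lemma norm_le_if_blk_proj_le:
  fixes blk :: "'d::finite \<Rightarrow> 'n::finite"
  assumes "\<And>i. norm (blk_proj blk i u) \<le> norm (blk_proj blk i v)"
  shows "norm u \<le> norm v"
proof -
  have "norm u ^ 2 \<le> norm v ^ 2"
    unfolding norm_sq_eq_sum_blk_proj[of u blk] norm_sq_eq_sum_blk_proj[of v blk]
    by (intro sum_mono power_mono assms norm_ge_zero)
  then show ?thesis by (simp add: power_mono_iff)
qed

lemma perturbed_gradient_step_sq:
  fixes e D w :: "'a::real_inner"
  assumes mono: "\<eta> * norm e ^ 2 \<le> D \<bullet> e" and lip: "norm D \<le> L * norm e"
    and "\<alpha> > 0" "L \<ge> 0"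
  shows "norm (e - \<alpha> *\<^sub>R (D + w))^2
    \<le> (1 - 2 * \<alpha> * \<eta> + \<alpha>^2 * (1 + 2 * L^2)) * norm e^2 + (1 + 2 * \<alpha>^2) * norm w^2"
proof -
  have expand: "norm (e - \<alpha> *\<^sub>R (D + w))^2
      = norm e^2 - 2 * \<alpha> * (D \<bullet> e) - 2 * \<alpha> * (e \<bullet> w) + \<alpha>^2 * norm (D + w)^2"
  proof -
    have "e \<bullet> (\<alpha> *\<^sub>R (D + w)) = \<alpha> * (D \<bullet> e) + \<alpha> * (e \<bullet> w)"
      by (simp add: inner_add_right inner_commute algebra_simps)
    moreover have "norm (\<alpha> *\<^sub>R (D + w))^2 = \<alpha>^2 * norm (D + w)^2"
      by (simp only: norm_scaleR power_mult_distrib) (use \<open>\<alpha> > 0\<close> in simp)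
    ultimately show ?thesis
      using norm_diff_sq[of e "\<alpha> *\<^sub>R (D + w)"] by linarith
  qed
  have "norm (D + w)^2 \<le> 2 * norm D^2 + 2 * norm w^2"
    by (rule norm_add_sq_le)
  also have "\<dots> \<le> 2 * L^2 * norm e^2 + 2 * norm w^2"
    using power_mono[OF lip norm_ge_zero] by (simp add: power_mult_distrib)
  finally have "\<alpha>^2 * norm (D + w)^2 \<le> \<alpha>^2 * (2 * L^2 * norm e^2 + 2 * norm w^2)"
    by (intro mult_left_mono) auto
  moreover have "- 2 * \<alpha> * (e \<bullet> w) \<le> \<alpha>^2 * norm e^2 + norm w^2"
    using norm_add_sq[of "\<alpha> *\<^sub>R e" w] zero_le_power2[of "norm (\<alpha> *\<^sub>R e + w)"] \<open>\<alpha> > 0\<close>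
    by (simp add: power_mult_distrib)
  moreover have "\<alpha> * (\<eta> * norm e^2) \<le> \<alpha> * (D \<bullet> e)"
    using mono \<open>\<alpha> > 0\<close> by (intro mult_left_mono) auto
  ultimately show ?thesis
    unfolding expand by (simp add: algebra_simps)
qed

lemma perturbed_gradient_step_coeff_nonneg:
  fixes e D :: "'a::real_inner"
  assumes mono: "\<eta> * norm e ^ 2 \<le> D \<bullet> e" and lip: "norm D \<le> L * norm e" and "\<eta> > 0"
  shows "0 \<le> (1 - 2 * \<alpha> * \<eta> + \<alpha>^2 * (1 + 2 * L^2)) * norm e^2"
proof (cases "e = 0")
  case False
  have "\<eta> * norm e ^ 2 \<le> L * norm e ^ 2"
    using mono norm_cauchy_schwarz[of D e] mult_right_mono[OF lip norm_ge_zero[of e]]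
    by (simp add: power2_eq_square)
  then have "\<eta> \<le> L"
    using False by simp
  then have "\<eta>^2 \<le> L^2"
    using \<open>\<eta> > 0\<close> by (intro power_mono) auto
  then have "\<eta>^2 \<le> 1 + 2 * L^2"
    using zero_le_power2[of L] by linarith
  then have "\<alpha>^2 * \<eta>^2 \<le> \<alpha>^2 * (1 + 2 * L^2)"
    by (intro mult_left_mono) auto
  moreover have "0 \<le> (1 - \<alpha> * \<eta>)^2"
    by simp
  ultimately have "0 \<le> 1 - 2 * \<alpha> * \<eta> + \<alpha>^2 * (1 + 2 * L^2)"
    by (simp add: power2_eq_square algebra_simps)
  then show ?thesis
    by simp
qed simp

text \<open>With X = norm x_k^2 \<le> 2 norm (x_k - x*)^2 + 2 norm x*^2 and 1 / S_k \<le> alpha^2, the part of the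
  variance bound that grows with x_k moves into the contraction factor.\<close>
lemma variance_absorb:
  fixes E X s \<alpha> n1 n2 c N :: real
  assumes "1 / s \<le> \<alpha>^2" "s > 0" "E \<ge> 0" "X \<le> 2 * E + 2 * N"
  shows "c * E + (1 + 2 * \<alpha>^2) * ((n1^2 * X + n2^2) / s)
    \<le> (c + \<alpha>^2 * (2 * (1 + 2 * \<alpha>^2) * n1^2)) * E
      + (2 * (1 + 2 * \<alpha>^2) * n1^2 * N + (1 + 2 * \<alpha>^2) * n2^2) / s"
proof -
  define K where "K = 1 + 2 * \<alpha>^2"
  have K: "K > 0" unfolding K_def by (simp add: add_pos_nonneg)
  have "K * ((n1^2 * X + n2^2) / s) \<le> K * ((n1^2 * (2 * E + 2 * N) + n2^2) / s)"
    using assms K by (intro mult_left_mono divide_right_mono add_right_mono) auto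
  also have "\<dots> = (2 * K * n1^2 * E) * (1 / s) + (2 * K * n1^2 * N + K * n2^2) / s"
    using assms by (simp add: field_simps)
  also have "\<dots> \<le> (2 * K * n1^2 * E) * \<alpha>^2 + (2 * K * n1^2 * N + K * n2^2) / s"
    using assms K by (intro add_right_mono mult_left_mono) auto
  finally show ?thesis
    unfolding K_def[symmetric] by (simp add: algebra_simps)
qed

lemma
  fixes X :: "nat \<Rightarrow> 'a \<Rightarrow> 'b::topological_space"
  shows space_nat_filtration: "space (nat_filtration M X k) = space M"
    and sets_nat_filtration: "sets (nat_filtration M X k)
      = sigma_sets (space M) {X j -` A \<inter> space M | j A. j \<le> k \<and> A \<in> sets borel}"
  unfolding nat_filtration_def by (auto simp: space_measure_of_conv intro!: sets_measure_of)

lemma subalgebra_nat_filtration: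
  assumes "\<And>j. X j \<in> borel_measurable M"
  shows "subalgebra M (nat_filtration M X k)"
  unfolding subalgebra_def space_nat_filtration sets_nat_filtration
  using assms by (auto intro!: sets.sigma_sets_subset measurable_sets)

lemma measurable_nat_filtration:
  assumes "j \<le> k"
  shows "X j \<in> borel_measurable (nat_filtration M X k)"
proof (rule measurableI)
  fix A :: "'b set" assume "A \<in> sets borel"
  then show "X j -` A \<inter> space (nat_filtration M X k) \<in> sets (nat_filtration M X k)"
    using assms unfolding space_nat_filtration sets_nat_filtration
    by (blast intro: sigma_sets.Basic)
qed simp

lemma sigma_finite_subalgebra_of_prob_space:
  "prob_space M \<Longrightarrow> subalgebra M F \<Longrightarrow> sigma_finite_subalgebra M F"
  by (intro finite_measure_subalgebra_is_sigma_finite)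
    (simp add: finite_measure_subalgebra_def finite_measure_subalgebra_axioms_def prob_space_def)

lemma (in sigma_finite_subalgebra) nn_cond_exp_le_affine:
  assumes Y: "Y \<in> borel_measurable M" and A: "A \<in> borel_measurable F" and W: "W \<in> borel_measurable M"
    and le: "\<And>\<omega>. \<omega> \<in> space M \<Longrightarrow> Y \<omega> \<le> A \<omega> + K * W \<omega>"
  shows "AE \<omega> in M. nn_cond_exp M F Y \<omega> \<le> A \<omega> + K * nn_cond_exp M F W \<omega>"
proof -
  have A_M: "A \<in> borel_measurable M"
    using A by (rule measurable_from_subalg[OF subalg])
  have "AE \<omega> in M. nn_cond_exp M F Y \<omega> \<le> nn_cond_exp M F (\<lambda>\<omega>. A \<omega> + K * W \<omega>) \<omega>"
    using Y A_M W le by (intro nn_cond_exp_mono) auto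
  moreover have "AE \<omega> in M. nn_cond_exp M F A \<omega> + nn_cond_exp M F (\<lambda>\<omega>. K * W \<omega>) \<omega>
      = nn_cond_exp M F (\<lambda>\<omega>. A \<omega> + K * W \<omega>) \<omega>"
    using A_M W by (intro nn_cond_exp_sum) auto
  moreover have "AE \<omega> in M. nn_cond_exp M F A \<omega> = A \<omega>"
    using nn_cond_exp_F_meas[OF A] by (auto elim: AE_mp)
  moreover have "AE \<omega> in M. nn_cond_exp M F (\<lambda>\<omega>. K * W \<omega>) \<omega> = K * nn_cond_exp M F W \<omega>"
    using nn_cond_exp_prod[of "\<lambda>_. K" W] W by (auto elim: AE_mp)
  ultimately show ?thesis
    by eventually_elim simp
qed

text \<open>Only those hypotheses of lemma2 that the argument uses.\<close>
locale vs_pgr =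
  fixes M :: "'a measure"
    and blk :: "'d::finite \<Rightarrow> 'n::finite"
    and f :: "'n \<Rightarrow> real^'d \<Rightarrow> real"
    and r :: "'n \<Rightarrow> real^'d \<Rightarrow> ereal"
    and g\<psi> :: "'n \<Rightarrow> real^'d \<Rightarrow> 's \<Rightarrow> real^'d"
    and G :: "real^'d \<Rightarrow> real^'d"
    and \<xi> :: "'n \<Rightarrow> nat \<Rightarrow> nat \<Rightarrow> 'a \<Rightarrow> 's"
    and x :: "nat \<Rightarrow> 'a \<Rightarrow> real^'d"
    and S :: "nat \<Rightarrow> nat"
    and xs :: "real^'d"
    and \<alpha> L \<eta> \<nu>\<^sub>1 \<nu>\<^sub>2 :: real
  assumes prob: "prob_space M"
    and A1_convex: "\<And>i. convex_on (eff_dom blk i (r i)) (\<lambda>y. real_of_ereal (r i y))"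
    and A1_proper: "\<And>i y. y \<in> blk_space blk i \<Longrightarrow> r i y \<noteq> -\<infinity>"
    and A1_lsc: "\<And>i. lsc_on (blk_space blk i) (r i)"
    and G_grad: "\<And>i z. z \<in> joint_dom blk r \<Longrightarrow>
        ((\<lambda>y. f i (blk_upd blk i z y)) has_derivative (\<lambda>v. G z \<bullet> blk_proj blk i v))
          (at (blk_proj blk i z))"
    and B1: "\<And>u v. u \<in> joint_dom blk r \<Longrightarrow> v \<in> joint_dom blk r \<Longrightarrow>
        norm (G u - G v) \<le> L * norm (u - v)"
    and B2: "\<And>u v. u \<in> joint_dom blk r \<Longrightarrow> v \<in> joint_dom blk r \<Longrightarrow>
        (G u - G v) \<bullet> (u - v) \<ge> \<eta> * (norm (u - v))^2"
    and eta_pos: "\<eta> > 0"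
    and x_meas: "\<And>j. x j \<in> borel_measurable M"
    and g_meas: "\<And>i j p. p < S j \<Longrightarrow> (\<lambda>\<omega>. g\<psi> i (x j \<omega>) (\<xi> i j p \<omega>)) \<in> borel_measurable M"
    and x0: "\<And>\<omega>. \<omega> \<in> space M \<Longrightarrow> x 0 \<omega> \<in> joint_dom blk r"
    and scheme: "\<And>j \<omega> i. \<omega> \<in> space M \<Longrightarrow>
        blk_proj blk i (x (Suc j) \<omega>) =
          prox blk i \<alpha> (r i) (blk_proj blk i (x j \<omega>) -
             (\<alpha> / real (S j)) *\<^sub>R (\<Sum>p<S j. blk_proj blk i (g\<psi> i (x j \<omega>) (\<xi> i j p \<omega>))))"
    and B3: "\<And>j. AE \<omega> in M.
        nn_cond_exp M (nat_filtration M x j)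
          (\<lambda>\<omega>. ennreal ((norm ((1 / real (S j)) *\<^sub>R
               (\<Sum>p<S j. \<Sum>i\<in>UNIV. blk_proj blk i (g\<psi> i (x j \<omega>) (\<xi> i j p \<omega>))) - G (x j \<omega>)))^2)) \<omega>
        \<le> ennreal ((\<nu>\<^sub>1^2 * (norm (x j \<omega>))^2 + \<nu>\<^sub>2^2) / real (S j))"
    and NE: "is_NE blk f r xs"
    and alpha_pos: "\<alpha> > 0" and alpha_le: "\<alpha> \<le> L"
    and S_mono: "mono S"
    and S0: "real (S 0) \<ge> 1 / \<alpha>^2"
begin

text \<open>grad_est j \<omega> - G (x j \<omega>) is the sampling error w_{j,S_j} of the paper.\<close>
definition grad_est :: "nat \<Rightarrow> 'a \<Rightarrow> real^'d" where
  "grad_est j \<omega> = (1 / real (S j)) *\<^sub>R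
     (\<Sum>p<S j. \<Sum>i\<in>UNIV. blk_proj blk i (g\<psi> i (x j \<omega>) (\<xi> i j p \<omega>)))"

lemma prox_setting_blk: "prox_setting (blk_space blk i) (r i) \<alpha>"
proof unfold_locales
  obtain \<omega> where "\<omega> \<in> space M"
    using prob_space.not_empty[OF prob] by blast
  then have "blk_proj blk i (x 0 \<omega>) \<in> eff_dom blk i (r i)"
    using x0 unfolding joint_dom_def by blast
  then show "{y \<in> blk_space blk i. r i y < \<infinity>} \<noteq> {}"
    unfolding eff_dom_def by blast
  show "convex_on {y \<in> blk_space blk i. r i y < \<infinity>} (\<lambda>y. real_of_ereal (r i y))"
    using A1_convex[of i] unfolding eff_dom_def .
qed (use A1_proper A1_lsc alpha_pos closed_blk_space in auto)

lemma prox_vi_prox: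
  "prox_setting.prox_vi (blk_space blk i) (r i) \<alpha> z (prox blk i \<alpha> (r i) z)"
  using prox_iff_vi[OF prox_setting_blk] by blast

lemma prox_in_eff_dom: "prox blk i \<alpha> (r i) z \<in> eff_dom blk i (r i)"
  using prox_vi_prox unfolding prox_setting.prox_vi_def[OF prox_setting_blk] eff_dom_def by blast

lemma blk_proj_iterate:
  assumes "\<omega> \<in> space M"
  shows "blk_proj blk i (x (Suc j) \<omega>) = prox blk i \<alpha> (r i) (blk_proj blk i (x j \<omega> - \<alpha> *\<^sub>R grad_est j \<omega>))"
proof -
  have "blk_proj blk i (grad_est j \<omega>)
      = (1 / real (S j)) *\<^sub>R (\<Sum>p<S j. blk_proj blk i (g\<psi> i (x j \<omega>) (\<xi> i j p \<omega>)))"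
    unfolding grad_est_def by (simp add: blk_proj_scaleR blk_proj_sum blk_proj_blk_proj)
  then show ?thesis
    unfolding scheme[OF assms] blk_proj_diff blk_proj_scaleR by simp
qed

lemma iterate_in_joint_dom:
  assumes "\<omega> \<in> space M"
  shows "x j \<omega> \<in> joint_dom blk r"
proof (cases j)
  case 0
  then show ?thesis using x0[OF assms] by simp
next
  case (Suc j')
  then show ?thesis
    using blk_proj_iterate[OF assms] prox_in_eff_dom unfolding joint_dom_def Suc by simp
qed

lemma NE_in_joint_dom: "xs \<in> joint_dom blk r"
proof -
  have "blk_proj blk i xs \<in> eff_dom blk i (r i)" for i
  proof -
    obtain y where y: "y \<in> eff_dom blk i (r i)"
      using prox_in_eff_dom by blast
    then have "ereal (f i xs) + r i (blk_proj blk i xs) \<le> ereal (f i (blk_upd blk i xs y)) + r i y"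
      using NE unfolding is_NE_def eff_dom_def by blast
    moreover have "ereal (f i (blk_upd blk i xs y)) + r i y < \<infinity>"
      using y unfolding eff_dom_def by simp
    ultimately have "r i (blk_proj blk i xs) < \<infinity>"
      by (cases "r i (blk_proj blk i xs)") auto
    then show ?thesis
      by (simp add: eff_dom_def blk_proj_in_blk_space)
  qed
  then show ?thesis
    unfolding joint_dom_def by blast
qed

lemma NE_fixed_point:
  "prox blk i \<alpha> (r i) (blk_proj blk i (xs - \<alpha> *\<^sub>R G xs)) = blk_proj blk i xs"
proof -
  interpret prox_setting "blk_space blk i" "r i" \<alpha> by (rule prox_setting_blk)
  define p where "p = blk_proj blk i xs"
  define F where "F y = f i (blk_upd blk i xs y)" for y
  have p_dom: "p \<in> eff_dom blk i (r i)"
    using NE_in_joint_dom unfolding joint_dom_def p_def by blast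
  then obtain rp where rp: "r i p = ereal rp"
    using finite_value unfolding eff_dom_def by blast
  have min: "\<forall>y\<in>eff_dom blk i (r i). F p + real_of_ereal (r i p) \<le> F y + real_of_ereal (r i y)"
  proof
    fix y assume y: "y \<in> eff_dom blk i (r i)"
    then obtain ry where "r i y = ereal ry"
      using finite_value unfolding eff_dom_def by blast
    then show "F p + real_of_ereal (r i p) \<le> F y + real_of_ereal (r i y)"
      using NE y rp unfolding is_NE_def eff_dom_def F_def p_def
      by (force simp: blk_upd_blk_proj)
  qed
  have "r i p + ereal ((blk_proj blk i (xs - \<alpha> *\<^sub>R G xs) - p) \<bullet> (u - p) / \<alpha>) \<le> r i u"
    if u: "u \<in> blk_space blk i" for u
  proof (cases "r i u = \<infinity>")
    case False
    then have u_dom: "u \<in> eff_dom blk i (r i)"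
      using u unfolding eff_dom_def by (simp add: less_le)
    then obtain ru where ru: "r i u = ereal ru"
      using finite_value unfolding eff_dom_def by blast
    have "rp - ru \<le> G xs \<bullet> blk_proj blk i (u - p)"
      using convex_min_first_order[OF convex_dom A1_convex[of i, unfolded eff_dom_def]
          p_dom[unfolded eff_dom_def] u_dom[unfolded eff_dom_def]
          G_grad[OF NE_in_joint_dom, of i, folded F_def p_def] min[unfolded eff_dom_def]] rp ru
      by simp
    moreover have "(blk_proj blk i (xs - \<alpha> *\<^sub>R G xs) - p) \<bullet> (u - p) / \<alpha> = - (G xs \<bullet> blk_proj blk i (u - p))"
      using alpha_pos unfolding p_def
      by (simp add: blk_proj_diff blk_proj_scaleR inner_blk_proj_commute)
    ultimately show ?thesis
      using rp ru by simp
  qed simp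
  then have "prox_vi (blk_proj blk i (xs - \<alpha> *\<^sub>R G xs)) p"
    using p_dom unfolding prox_vi_def eff_dom_def by blast
  then show ?thesis
    unfolding p_def using prox_iff_vi[OF prox_setting_blk] by blast
qed

lemma iterate_error_le:
  assumes \<omega>: "\<omega> \<in> space M"
  shows "norm (x (Suc k) \<omega> - xs)
    \<le> norm ((x k \<omega> - xs) - \<alpha> *\<^sub>R ((G (x k \<omega>) - G xs) + (grad_est k \<omega> - G (x k \<omega>))))"
proof (rule norm_le_if_blk_proj_le)
  fix i
  interpret prox_setting "blk_space blk i" "r i" \<alpha> by (rule prox_setting_blk)
  define a where "a = blk_proj blk i (x k \<omega> - \<alpha> *\<^sub>R grad_est k \<omega>)"
  define b where "b = blk_proj blk i (xs - \<alpha> *\<^sub>R G xs)"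
  have "norm (blk_proj blk i (x (Suc k) \<omega> - xs)) = norm (prox blk i \<alpha> (r i) a - prox blk i \<alpha> (r i) b)"
    unfolding blk_proj_diff[of blk i "x (Suc k) \<omega>" xs] a_def b_def blk_proj_iterate[OF \<omega>] NE_fixed_point ..
  also have "\<dots> \<le> norm (a - b)"
    using prox_vi_nonexpansive[OF prox_vi_prox prox_vi_prox] .
  also have "a - b = blk_proj blk i ((x k \<omega> - xs) - \<alpha> *\<^sub>R ((G (x k \<omega>) - G xs) + (grad_est k \<omega> - G (x k \<omega>))))"
    unfolding a_def b_def blk_proj_diff[symmetric] by (simp add: algebra_simps)
  finally show "norm (blk_proj blk i (x (Suc k) \<omega> - xs))
      \<le> norm (blk_proj blk i ((x k \<omega> - xs) - \<alpha> *\<^sub>R ((G (x k \<omega>) - G xs) + (grad_est k \<omega> - G (x k \<omega>)))))" .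
qed

definition contraction_coeff :: real where
  "contraction_coeff = 1 - 2 * \<alpha> * \<eta> + \<alpha>^2 * (1 + 2 * L^2)"

lemma iterate_error_sq_le:
  assumes \<omega>: "\<omega> \<in> space M"
  shows "norm (x (Suc k) \<omega> - xs)^2
      \<le> contraction_coeff * norm (x k \<omega> - xs)^2 + (1 + 2 * \<alpha>^2) * norm (grad_est k \<omega> - G (x k \<omega>))^2"
    and "0 \<le> contraction_coeff * norm (x k \<omega> - xs)^2"
proof -
  have mono: "\<eta> * norm (x k \<omega> - xs)^2 \<le> (G (x k \<omega>) - G xs) \<bullet> (x k \<omega> - xs)"
    and lip: "norm (G (x k \<omega>) - G xs) \<le> L * norm (x k \<omega> - xs)"
    using B1 B2 iterate_in_joint_dom[OF \<omega>] NE_in_joint_dom by auto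
  have "L \<ge> 0" using alpha_pos alpha_le by simp
  show "norm (x (Suc k) \<omega> - xs)^2
      \<le> contraction_coeff * norm (x k \<omega> - xs)^2 + (1 + 2 * \<alpha>^2) * norm (grad_est k \<omega> - G (x k \<omega>))^2"
    unfolding contraction_coeff_def
    using power_mono[OF iterate_error_le[OF \<omega>] norm_ge_zero]
      perturbed_gradient_step_sq[OF mono lip alpha_pos \<open>L \<ge> 0\<close>] by (rule order_trans)
  show "0 \<le> contraction_coeff * norm (x k \<omega> - xs)^2"
    unfolding contraction_coeff_def by (rule perturbed_gradient_step_coeff_nonneg[OF mono lip eta_pos])
qed

lemma G_iterate_measurable: "(\<lambda>\<omega>. G (x k \<omega>)) \<in> borel_measurable M"
proof -
  have "L-lipschitz_on (joint_dom blk r) G"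
    using B1 alpha_pos alpha_le by (intro lipschitz_onI) (auto simp: dist_norm)
  then have "G \<in> borel_measurable (restrict_space borel (joint_dom blk r))"
    by (intro borel_measurable_continuous_on_restrict lipschitz_on_continuous_on)
  moreover have "x k \<in> measurable M (restrict_space borel (joint_dom blk r))"
    using iterate_in_joint_dom x_meas by (intro measurable_restrict_space2) auto
  ultimately show ?thesis
    by (rule measurable_compose[rotated])
qed

lemma grad_est_measurable: "grad_est k \<in> borel_measurable M"
  unfolding grad_est_def
  by (intro borel_measurable_scaleR borel_measurable_const borel_measurable_sum
      measurable_compose[OF g_meas borel_measurable_blk_proj]) auto

lemma cond_error_le:
  "AE \<omega> in M. nn_cond_exp M (nat_filtration M x k) (\<lambda>\<omega>. ennreal (norm (x (Suc k) \<omega> - xs)^2)) \<omega>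
     \<le> ennreal (contraction_coeff * norm (x k \<omega> - xs)^2
         + (1 + 2 * \<alpha>^2) * ((\<nu>\<^sub>1^2 * norm (x k \<omega>)^2 + \<nu>\<^sub>2^2) / real (S k)))"
proof -
  let ?F = "nat_filtration M x k"
  define K where "K = 1 + 2 * \<alpha>^2"
  have "K \<ge> 0" unfolding K_def by simp
  interpret sigma_finite_subalgebra M ?F
    using sigma_finite_subalgebra_of_prob_space[OF prob subalgebra_nat_filtration[OF x_meas]] .
  note [measurable] = x_meas G_iterate_measurable grad_est_measurable measurable_nat_filtration[of k k]
  have "AE \<omega> in M. nn_cond_exp M ?F (\<lambda>\<omega>. ennreal (norm (x (Suc k) \<omega> - xs)^2)) \<omega>
      \<le> ennreal (contraction_coeff * norm (x k \<omega> - xs)^2)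
        + ennreal K * nn_cond_exp M ?F (\<lambda>\<omega>. ennreal (norm (grad_est k \<omega> - G (x k \<omega>))^2)) \<omega>"
  proof (rule nn_cond_exp_le_affine)
    fix \<omega> assume \<omega>: "\<omega> \<in> space M"
    have "ennreal (norm (x (Suc k) \<omega> - xs)^2)
        \<le> ennreal (contraction_coeff * norm (x k \<omega> - xs)^2 + K * norm (grad_est k \<omega> - G (x k \<omega>))^2)"
      using iterate_error_sq_le(1)[OF \<omega>] unfolding K_def by (rule ennreal_leI)
    then show "ennreal (norm (x (Suc k) \<omega> - xs)^2)
        \<le> ennreal (contraction_coeff * norm (x k \<omega> - xs)^2)
          + ennreal K * ennreal (norm (grad_est k \<omega> - G (x k \<omega>))^2)"
      using iterate_error_sq_le(2)[OF \<omega>] \<open>K \<ge> 0\<close> by (simp add: ennreal_plus ennreal_mult)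
  qed measurable
  moreover have "AE \<omega> in M. nn_cond_exp M ?F (\<lambda>\<omega>. ennreal (norm (grad_est k \<omega> - G (x k \<omega>))^2)) \<omega>
      \<le> ennreal ((\<nu>\<^sub>1^2 * norm (x k \<omega>)^2 + \<nu>\<^sub>2^2) / real (S k))"
    using B3[of k] unfolding grad_est_def .
  ultimately show ?thesis
    using AE_space unfolding K_def[symmetric]
  proof eventually_elim
    case (elim \<omega>)
    have "0 \<le> contraction_coeff * norm (x k \<omega> - xs)^2"
      using iterate_error_sq_le(2)[OF elim(3)] .
    moreover define B where "B = (\<nu>\<^sub>1^2 * norm (x k \<omega>)^2 + \<nu>\<^sub>2^2) / real (S k)"
    moreover have "0 \<le> B"
      unfolding B_def by simp
    ultimately show ?case
      using order_trans[OF elim(1) add_left_mono[OF mult_left_mono[OF elim(2)]]] \<open>K \<ge> 0\<close>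
      unfolding B_def[symmetric] by (simp add: ennreal_plus ennreal_mult)
  qed
qed

lemma batch_size_pos: "real (S k) > 0"
  and inverse_batch_size_le: "1 / real (S k) \<le> \<alpha>^2"
proof -
  have "0 < 1 / \<alpha>^2" "S 0 \<le> S k"
    using alpha_pos S_mono by (auto simp: monoD)
  then have "1 / \<alpha>^2 \<le> real (S k)"
    using S0 by linarith
  then show pos: "real (S k) > 0"
    using \<open>0 < 1 / \<alpha>^2\<close> by linarith
  show "1 / real (S k) \<le> \<alpha>^2"
    using \<open>1 / \<alpha>^2 \<le> real (S k)\<close> pos alpha_pos by (simp add: field_simps)
qed

end

theorem lemma2:
  fixes M :: "'a measure"
    and blk :: "'d::finite \<Rightarrow> 'n::finite"
    and f :: "'n \<Rightarrow> real^'d \<Rightarrow> real"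
    and r :: "'n \<Rightarrow> real^'d \<Rightarrow> ereal"
    and \<psi> :: "'n \<Rightarrow> real^'d \<Rightarrow> 's \<Rightarrow> real"
    and g\<psi> :: "'n \<Rightarrow> real^'d \<Rightarrow> 's \<Rightarrow> real^'d"
    and G :: "real^'d \<Rightarrow> real^'d"
    and \<xi> :: "'n \<Rightarrow> nat \<Rightarrow> nat \<Rightarrow> 'a \<Rightarrow> 's"
    and x :: "nat \<Rightarrow> 'a \<Rightarrow> real^'d"
    and S :: "nat \<Rightarrow> nat"
    and xs :: "real^'d"
    and \<alpha> L \<eta> \<nu>\<^sub>1 \<nu>\<^sub>2 :: real
    and k :: nat
  assumes prob: "prob_space M"
    \<comment> \<open>Assumption A(i)\<close>
    and A1_convex: "\<And>i. convex_on (eff_dom blk i (r i)) (\<lambda>y. real_of_ereal (r i y))"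
    and A1_proper: "\<And>i y. y \<in> blk_space blk i \<Longrightarrow> r i y \<noteq> -\<infinity>"
    and A1_lsc: "\<And>i. lsc_on (blk_space blk i) (r i)"
    \<comment> \<open>Assumption A(ii)\<close>
    and A2: "\<And>i z. (\<forall>m. m \<noteq> i \<longrightarrow> blk_proj blk m z \<in> eff_dom blk m (r m)) \<Longrightarrow>
        \<exists>U. open U \<and> eff_dom blk i (r i) \<subseteq> U \<and>
            convex_on U (\<lambda>y. f i (blk_upd blk i z y)) \<and>
            (\<exists>g. (\<forall>y\<in>U. ((\<lambda>y. f i (blk_upd blk i z y)) has_derivative (\<lambda>v. g y \<bullet> v)) (at y))
                 \<and> continuous_on U g)"
    \<comment> \<open>Assumption A(iii)\<close>
    and A3: "\<And>i z s. (\<forall>m. m \<noteq> i \<longrightarrow> blk_proj blk m z \<in> eff_dom blk m (r m)) \<Longrightarrow>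
        \<exists>U. open U \<and> eff_dom blk i (r i) \<subseteq> U \<and>
            (\<forall>y\<in>U. (\<lambda>y. \<psi> i (blk_upd blk i z y) s) differentiable (at y))"
    \<comment> \<open>f_i(x) = E[psi_i(x; xi_i)]; each sample xi_{i,k}^p is a realization of xi_i\<close>
    and f_exp: "\<And>i k p z. p < S k \<Longrightarrow>
        integrable M (\<lambda>\<omega>. \<psi> i z (\<xi> i k p \<omega>)) \<and> f i z = (\<integral>\<omega>. \<psi> i z (\<xi> i k p \<omega>) \<partial>M)"
    \<comment> \<open>g\<psi> i z s is (block i of) the gradient of psi_i(., z_{-i}; s) at z_i\<close>
    and g\<psi>_grad: "\<And>i z s. z \<in> joint_dom blk r \<Longrightarrow>
        ((\<lambda>y. \<psi> i (blk_upd blk i z y) s) has_derivative (\<lambda>v. g\<psi> i z s \<bullet> blk_proj blk i v))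
          (at (blk_proj blk i z))"
    \<comment> \<open>G(z) = (grad_{x_i} f_i(z))_i\<close>
    and G_grad: "\<And>i z. z \<in> joint_dom blk r \<Longrightarrow>
        ((\<lambda>y. f i (blk_upd blk i z y)) has_derivative (\<lambda>v. G z \<bullet> blk_proj blk i v))
          (at (blk_proj blk i z))"
    \<comment> \<open>Assumption B(i), B(ii)\<close>
    and B1: "\<And>u v. u \<in> joint_dom blk r \<Longrightarrow> v \<in> joint_dom blk r \<Longrightarrow>
        norm (G u - G v) \<le> L * norm (u - v)"
    and B2: "\<And>u v. u \<in> joint_dom blk r \<Longrightarrow> v \<in> joint_dom blk r \<Longrightarrow>
        (G u - G v) \<bullet> (u - v) \<ge> \<eta> * (norm (u - v))^2"
    and eta_pos: "\<eta> > 0"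
    \<comment> \<open>the iterates are random vectors; VS-PGR scheme\<close>
    and x_meas: "\<And>j. x j \<in> borel_measurable M"
    and g_meas: "\<And>i j p. p < S j \<Longrightarrow> (\<lambda>\<omega>. g\<psi> i (x j \<omega>) (\<xi> i j p \<omega>)) \<in> borel_measurable M"
    and x0: "\<And>\<omega>. \<omega> \<in> space M \<Longrightarrow> x 0 \<omega> \<in> joint_dom blk r"
    and scheme: "\<And>j \<omega> i. \<omega> \<in> space M \<Longrightarrow>
        blk_proj blk i (x (Suc j) \<omega>) =
          prox blk i \<alpha> (r i) (blk_proj blk i (x j \<omega>) -
             (\<alpha> / real (S j)) *\<^sub>R (\<Sum>p<S j. blk_proj blk i (g\<psi> i (x j \<omega>) (\<xi> i j p \<omega>))))"
    \<comment> \<open>Assumption B(iii)\<close>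
    and nu_nonneg: "\<nu>\<^sub>1 \<ge> 0" "\<nu>\<^sub>2 \<ge> 0"
    and B3: "\<And>j. AE \<omega> in M.
        nn_cond_exp M (nat_filtration M x j)
          (\<lambda>\<omega>. ennreal ((norm ((1 / real (S j)) *\<^sub>R
               (\<Sum>p<S j. \<Sum>i\<in>UNIV. blk_proj blk i (g\<psi> i (x j \<omega>) (\<xi> i j p \<omega>))) - G (x j \<omega>)))^2)) \<omega>
        \<le> ennreal ((\<nu>\<^sub>1^2 * (norm (x j \<omega>))^2 + \<nu>\<^sub>2^2) / real (S j))"
    \<comment> \<open>x* is the Nash equilibrium\<close>
    and NE: "is_NE blk f r xs"
    \<comment> \<open>step size and batch sizes\<close>
    and alpha_pos: "\<alpha> > 0" and alpha_le: "\<alpha> \<le> L"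
    and S_mono: "mono S"
    and S0: "real (S 0) \<ge> 1 / \<alpha>^2"
  shows "let Lt = sqrt (1 + 2 * (1 + 2 * \<alpha>^2) * \<nu>\<^sub>1^2 + 2 * L^2);
             \<nu>sq = 2 * (1 + 2 * \<alpha>^2) * \<nu>\<^sub>1^2 * (norm xs)^2 + (1 + 2 * \<alpha>^2) * \<nu>\<^sub>2^2
         in AE \<omega> in M.
              nn_cond_exp M (nat_filtration M x k) (\<lambda>\<omega>. ennreal ((norm (x (Suc k) \<omega> - xs))^2)) \<omega>
              \<le> ennreal ((1 - 2 * \<alpha> * \<eta> + \<alpha>^2 * Lt^2) * (norm (x k \<omega> - xs))^2 + \<nu>sq / real (S k))"
proof -
  interpret vs_pgr M blk f r g\<psi> G \<xi> x S xs \<alpha> L \<eta> \<nu>\<^sub>1 \<nu>\<^sub>2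
    by (rule vs_pgr.intro) fact+
  define K where "K = 1 + 2 * \<alpha>^2"
  have Lt_sq: "(sqrt (1 + 2 * K * \<nu>\<^sub>1^2 + 2 * L^2))^2 = 1 + 2 * K * \<nu>\<^sub>1^2 + 2 * L^2"
    unfolding K_def by (intro real_sqrt_pow2) (simp add: add_nonneg_nonneg)
  show ?thesis
    using cond_error_le[of k] unfolding Let_def K_def[symmetric] Lt_sq
  proof eventually_elim
    case (elim \<omega>)
    have "norm (x k \<omega>)^2 \<le> 2 * norm (x k \<omega> - xs)^2 + 2 * norm xs^2"
      using norm_add_sq_le[of "x k \<omega> - xs" xs] by simp
    then have "contraction_coeff * norm (x k \<omega> - xs)^2 + K * ((\<nu>\<^sub>1^2 * norm (x k \<omega>)^2 + \<nu>\<^sub>2^2) / real (S k))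
        \<le> (contraction_coeff + \<alpha>^2 * (2 * K * \<nu>\<^sub>1^2)) * norm (x k \<omega> - xs)^2
          + (2 * K * \<nu>\<^sub>1^2 * norm xs^2 + K * \<nu>\<^sub>2^2) / real (S k)"
      unfolding K_def by (rule variance_absorb[OF inverse_batch_size_le batch_size_pos zero_le_power2])
    moreover have "contraction_coeff + \<alpha>^2 * (2 * K * \<nu>\<^sub>1^2) = 1 - 2 * \<alpha> * \<eta> + \<alpha>^2 * (1 + 2 * K * \<nu>\<^sub>1^2 + 2 * L^2)"
      unfolding contraction_coeff_def by (simp add: algebra_simps)
    ultimately show ?case
      using elim by (auto elim!: order_trans intro!: ennreal_leI)
  qed
qed

end
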